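(* Let $\mathbb{K}$ be a field of characteristic zero (e.g. $\mathbb{Q}$, $\mathbb{R}$ or $\mathbb{C}$), and let $X,Y$ be non-commuting indeterminates. In the algebra $\mathbb{K}\langle\langle X,Y\rangle\rangle$ of formal power series in $X,Y$, there is a unique sequence $(C_k)_{k\ge 2}$, with each $C_k=C_k(X,Y)$ a homogeneous Lie polynomial in $X$ and $Y$ of degree $k$, such that $$ {\rm e}^{X+Y} = {\rm e}^{\frac{X}{2}}\,{\rm e}^{\frac{Y}{2}}\,{\rm e}^{C_2}\,{\rm e}^{C_3}\cdots{\rm e}^{C_k}\cdots\,{\rm e}^{C_k}\cdots{\rm e}^{C_3}\,{\rm e}^{C_2}\,{\rm e}^{\frac{Y}{2}}\,{\rm e}^{\frac{X}{2}}, $$ i.e. ${\rm e}^{X+Y}={\rm e}^{X/2}{\rm e}^{Y/2}\Big(\prod_{n=2}^{\infty}{\rm e}^{C_n}\Big)\Big(\prod_{n=\infty}^{2}{\rm e}^{C_n}\Big){\rm e}^{Y/2}{\rm e}^{X/2}$, where the first product is ordered with increasing index from left to right and the second with decreasing index. Moreover, $C_{2k}=0$ for all $k\ge 1$, so that $$ {\rm e}^{X+Y} = {\rm e}^{\frac{X}{2}}\,{\rm e}^{\frac{Y}{2}}\,{\rm e}^{C_3}\,{\rm e}^{C_5}\cdots{\rm e}^{C_{2k+1}}\cdots\,{\rm e}^{C_{2k+1}}\cdots{\rm e}^{C_5}\,{\rm e}^{C_3}\,{\rm e}^{\frac{Y}{2}}\,{\rm e}^{\frac{X}{2}}. $$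
   Context: $\mathbb{K}\langle\langle X,Y\rangle\rangle$ denotes the unital associative algebra of formal power series in the two non-commuting variables $X,Y$ over $\mathbb{K}$, with commutator $[a,b]=ab-ba$. A Lie polynomial in $X,Y$ is any element obtained from $X$ and $Y$ by finitely many additions, multiplications by scalars in $\mathbb{K}$ and commutators; it is homogeneous of degree $k$ if every term contains exactly $k$ letters. The exponential of an element without constant term is defined by its power series, and the infinite products converge in the formal (degree-graded) topology since $C_k$ has degree $k$. *)

theory Defs
  imports Main
begin

text \<open>Non-commutative formal power series in X, Y over a field: a series is the
  function sending each word to its coefficient. Words are lists of letters,
  False = X, True = Y.\<close>

type_synonym 'k ncps = "bool list \<Rightarrow> 'k"

definition ps_one :: "'k::field ncps" where
  "ps_one = (\<lambda>w. if w = [] then 1 else 0)"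

definition ps_X :: "'k::field ncps" where
  "ps_X = (\<lambda>w. if w = [False] then 1 else 0)"

definition ps_Y :: "'k::field ncps" where
  "ps_Y = (\<lambda>w. if w = [True] then 1 else 0)"

definition ps_add :: "'k::field ncps \<Rightarrow> 'k ncps \<Rightarrow> 'k ncps" where
  "ps_add f g = (\<lambda>w. f w + g w)"

definition ps_smult :: "'k::field \<Rightarrow> 'k ncps \<Rightarrow> 'k ncps" where
  "ps_smult c f = (\<lambda>w. c * f w)"

definition ps_mult :: "'k::field ncps \<Rightarrow> 'k ncps \<Rightarrow> 'k ncps" where
  "ps_mult f g = (\<lambda>w. \<Sum>i\<le>length w. f (take i w) * g (drop i w))"

definition ps_pow :: "'k::field ncps \<Rightarrow> nat \<Rightarrow> 'k ncps" where
  "ps_pow f n = ((ps_mult f) ^^ n) ps_one"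

definition ps_comm :: "'k::field ncps \<Rightarrow> 'k ncps \<Rightarrow> 'k ncps" where
  "ps_comm f g = ps_add (ps_mult f g) (ps_smult (-1) (ps_mult g f))"

text \<open>For f without constant term, f^n has
  no words of length < n, so the coefficient of w only receives contributions
  from n \<le> length w; the sum below is that (finite) coefficient.\<close>
definition ps_exp :: "'k::field ncps \<Rightarrow> 'k ncps" where
  "ps_exp f = (\<lambda>w. \<Sum>n\<le>length w. ps_pow f n w / of_nat (fact n))"

inductive_set lie_polys :: "'k::field ncps set" where
  lie_X: "ps_X \<in> lie_polys"
| lie_Y: "ps_Y \<in> lie_polys"
| lie_add: "f \<in> lie_polys \<Longrightarrow> g \<in> lie_polys \<Longrightarrow> ps_add f g \<in> lie_polys"
| lie_smult: "f \<in> lie_polys \<Longrightarrow> ps_smult c f \<in> lie_polys"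
| lie_comm: "f \<in> lie_polys \<Longrightarrow> g \<in> lie_polys \<Longrightarrow> ps_comm f g \<in> lie_polys"

definition homogeneous :: "nat \<Rightarrow> 'k::field ncps \<Rightarrow> bool" where
  "homogeneous k f \<longleftrightarrow> (\<forall>w. f w \<noteq> 0 \<longrightarrow> length w = k)"

definition ps_prod_list :: "'k::field ncps list \<Rightarrow> 'k ncps" where
  "ps_prod_list fs = foldr ps_mult fs ps_one"

definition formal_lim :: "(nat \<Rightarrow> 'k::field ncps) \<Rightarrow> 'k ncps \<Rightarrow> bool" where
  "formal_lim F L \<longleftrightarrow> (\<forall>w. \<exists>N0. \<forall>N\<ge>N0. F N w = L w)"

definition sym_partial :: "(nat \<Rightarrow> 'k::field ncps) \<Rightarrow> nat \<Rightarrow> 'k ncps" where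
  "sym_partial C N = ps_prod_list
     ([ps_exp (ps_smult (1/2) ps_X), ps_exp (ps_smult (1/2) ps_Y)]
      @ map (\<lambda>n. ps_exp (C n)) [2..<Suc N]
      @ map (\<lambda>n. ps_exp (C n)) (rev [2..<Suc N])
      @ [ps_exp (ps_smult (1/2) ps_Y), ps_exp (ps_smult (1/2) ps_X)])"

definition sym_factorization :: "(nat \<Rightarrow> 'k::field ncps) \<Rightarrow> bool" where
  "sym_factorization C \<longleftrightarrow>
     (\<forall>k\<ge>2. C k \<in> lie_polys \<and> homogeneous k (C k)) \<and>
     formal_lim (sym_partial C) (ps_exp (ps_add ps_X ps_Y))"

end

theory Submission
  imports Defs
begin

text \<open>
  For a list L of factors let
  P L = e^(X/2) e^(Y/2) e^(L_1) ... e^(L_n) e^(L_n) ... e^(L_1) e^(Y/2) e^(X/2), and let middle L be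
  the series with e^(X+Y) = (left half of P L) * middle L * (right half of P L). Then P L agrees with
  e^(X+Y) below degree k iff middle L agrees with 1 there, and appending a factor c that is
  homogeneous of degree k changes middle L in degree k by exactly -2 c. Hence C_k must be half the
  degree-k component of middle [C_2, ..., C_(k-1)], which gives existence and uniqueness together.

  That component is a Lie polynomial: for a product P of exponentials of homogeneous Lie elements,
  euler P * P^(-1) is a Lie series (euler multiplies each word by its length), because it is a sum
  of conjugates e^b a e^(-b) = e^(ad b) a of Lie elements; and in the lowest degree k of P - 1 its
  component is k times that of P.

  Finally, substituting -X, -Y for X, Y and inverting turns a symmetric factorization into one with
  factors -(-1)^k C_k, since the list of factors is a palindrome; by uniqueness C_(2k) = -C_(2k) = 0.
\<close>

section \<open>The ring of non-commutative formal power series\<close>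

text \<open>Wrapping the coefficient functions of type ncps in a type lets the series form a ring.\<close>

typedef 'a ser = "UNIV :: (bool list \<Rightarrow> 'a) set" morphisms coeff Ser
  by auto

lemma coeff_Ser [simp]: "coeff (Ser f) = f"
  by (simp add: Ser_inverse)

lemma ser_eqI: "(\<And>w. coeff f w = coeff g w) \<Longrightarrow> f = g"
  by (metis coeff_inverse ext)

definition lquot :: "bool \<Rightarrow> 'a ser \<Rightarrow> 'a ser" where
  "lquot x f = Ser (\<lambda>v. coeff f (x # v))"

definition smult :: "'a::times \<Rightarrow> 'a ser \<Rightarrow> 'a ser" where
  "smult c f = Ser (\<lambda>w. c * coeff f w)"

lemma coeff_smult [simp]: "coeff (smult c f) w = c * coeff f w"
  by (simp add: smult_def)

instantiation ser :: (comm_ring_1) ring_1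
begin

definition "zero_ser = Ser (\<lambda>w. 0)"
definition "one_ser = Ser (\<lambda>w. if w = [] then 1 else 0)"
definition "plus_ser f g = Ser (\<lambda>w. coeff f w + coeff g w)"
definition "minus_ser f g = Ser (\<lambda>w. coeff f w - coeff g w)"
definition "uminus_ser f = Ser (\<lambda>w. - coeff f w)"
definition "times_ser f g = Ser (\<lambda>w. \<Sum>i\<le>length w. coeff f (take i w) * coeff g (drop i w))"

lemma coeff_0 [simp]: "coeff (0::'a ser) w = 0"
  by (simp add: zero_ser_def)

lemma coeff_1: "coeff (1::'a ser) w = (if w = [] then 1 else 0)"
  by (simp add: one_ser_def)

lemma coeff_add [simp]: "coeff (f + g) w = coeff f w + coeff g w"
  by (simp add: plus_ser_def)

lemma coeff_diff [simp]: "coeff (f - g) w = coeff f w - coeff g w"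
  by (simp add: minus_ser_def)

lemma coeff_uminus [simp]: "coeff (- f) w = - coeff f w"
  by (simp add: uminus_ser_def)

lemma coeff_mult: "coeff (f * g) w = (\<Sum>i\<le>length w. coeff f (take i w) * coeff g (drop i w))"
  by (simp add: times_ser_def)

lemma coeff_mult_Nil: "coeff (f * g) [] = coeff f [] * coeff g []"
  by (simp add: coeff_mult)

lemma coeff_mult_Cons:
  "coeff (f * g) (x # w) = coeff f [] * coeff g (x # w) + coeff (lquot x f * g) w"
  by (simp add: coeff_mult sum.atMost_Suc_shift lquot_def del: sum.atMost_Suc)

lemma lquot_mult: "lquot x (f * g) = smult (coeff f []) (lquot x g) + lquot x f * g"
  by (rule ser_eqI) (simp add: lquot_def coeff_mult_Cons)

lemma coeff_smult_mult: "coeff (smult c f * g) w = c * coeff (f * g) w"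
  by (simp add: coeff_mult sum_distrib_left mult.assoc)

lemma coeff_add_mult: "coeff ((f + g) * h) w = coeff (f * h) w + coeff (g * h) w"
  by (simp add: coeff_mult sum.distrib distrib_right)

lemma coeff_mult_add: "coeff (h * (f + g)) w = coeff (h * f) w + coeff (h * g) w"
  by (simp add: coeff_mult sum.distrib distrib_left)

lemma coeff_mult_assoc: "coeff ((f * g) * h) w = coeff (f * (g * h)) w"
proof (induction w arbitrary: f g h)
  case Nil
  then show ?case
    by (simp add: coeff_mult_Nil mult.assoc)
next
  case (Cons x w)
  have "coeff ((f * g) * h) (x # w) = coeff f [] * coeff g [] * coeff h (x # w)
      + coeff f [] * coeff (lquot x g * h) w + coeff ((lquot x f * g) * h) w"
    by (simp add: coeff_mult_Cons coeff_mult_Nil lquot_mult coeff_add_mult coeff_smult_mult)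
  also have "\<dots> = coeff (f * (g * h)) (x # w)"
    by (simp add: coeff_mult_Cons coeff_mult_Nil Cons.IH distrib_left mult.assoc)
  finally show ?case .
qed

instance
proof
  fix a b c :: "'a ser"
  show "a * b * c = a * (b * c)"
    by (rule ser_eqI) (rule coeff_mult_assoc)
  show "1 * a = a"
  proof (rule ser_eqI)
    fix w
    have "coeff (1 * a) w = (\<Sum>i\<in>{0}. coeff (1::'a ser) (take i w) * coeff a (drop i w))"
      unfolding coeff_mult by (rule sum.mono_neutral_right) (auto simp: coeff_1)
    then show "coeff (1 * a) w = coeff a w"
      by (simp add: coeff_1)
  qed
  show "a * 1 = a"
  proof (rule ser_eqI)
    fix w
    have "coeff (a * 1) w = (\<Sum>i\<in>{length w}. coeff a (take i w) * coeff (1::'a ser) (drop i w))"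
      unfolding coeff_mult by (rule sum.mono_neutral_right) (auto simp: coeff_1)
    then show "coeff (a * 1) w = coeff a w"
      by (simp add: coeff_1)
  qed
  show "(a + b) * c = a * c + b * c"
    by (rule ser_eqI) (simp add: coeff_add_mult)
  show "a * (b + c) = a * b + a * c"
    by (rule ser_eqI) (simp add: coeff_mult_add)
  show "a + b + c = a + (b + c)"
    by (rule ser_eqI) (simp add: add.assoc)
  show "a + b = b + a"
    by (rule ser_eqI) (simp add: add.commute)
  show "0 + a = a"
    by (rule ser_eqI) simp
  show "- a + a = 0"
    by (rule ser_eqI) simp
  show "a - b = a + - b"
    by (rule ser_eqI) simp
  show "(0::'a ser) \<noteq> 1"
    by (metis coeff_0 coeff_1 zero_neq_one)
qed

end

lemma coeff_1_Nil [simp]: "coeff 1 [] = 1"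
  and coeff_1_Cons [simp]: "coeff 1 (x # w) = 0"
  by (simp_all add: coeff_1)

lemma coeff_sum: "coeff (\<Sum>i\<in>A. f i) w = (\<Sum>i\<in>A. coeff (f i) w)"
  by (induction A rule: infinite_finite_induct) auto

lemma smult_mult_left [simp]: "smult c f * g = smult c (f * g)"
  by (rule ser_eqI) (simp add: coeff_smult_mult)

lemma mult_smult_right [simp]: "f * smult c g = smult c (f * (g :: 'a::comm_ring_1 ser))"
  by (rule ser_eqI) (simp add: coeff_mult sum_distrib_left algebra_simps)

lemma smult_smult [simp]: "smult a (smult b f) = smult (a * b) (f :: 'a::comm_ring_1 ser)"
  by (rule ser_eqI) (simp add: mult.assoc)

lemma smult_1_left [simp]: "smult 1 f = (f :: 'a::comm_ring_1 ser)"
  by (rule ser_eqI) simp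

lemma smult_0_left [simp]: "smult 0 f = (0 :: 'a::comm_ring_1 ser)"
  by (rule ser_eqI) simp

lemma smult_0_right [simp]: "smult c 0 = (0 :: 'a::comm_ring_1 ser)"
  by (rule ser_eqI) simp

lemma smult_add_left: "smult (a + b) f = smult a f + (smult b f :: 'a::comm_ring_1 ser)"
  by (rule ser_eqI) (simp add: distrib_right)

lemma smult_add_right: "smult c (f + g) = smult c f + (smult c g :: 'a::comm_ring_1 ser)"
  by (rule ser_eqI) (simp add: distrib_left)

lemma smult_diff_right: "smult c (f - g) = smult c f - (smult c g :: 'a::comm_ring_1 ser)"
  by (rule ser_eqI) (simp add: right_diff_distrib)

lemma smult_minus_right [simp]: "smult c (- f) = - (smult c f :: 'a::comm_ring_1 ser)"
  by (rule ser_eqI) simp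

lemma smult_minus_left: "smult (- c) f = - (smult c f :: 'a::comm_ring_1 ser)"
  by (rule ser_eqI) simp

lemma smult_sum: "smult c (\<Sum>i\<in>A. f i) = (\<Sum>i\<in>A. smult c (f i) :: 'a::comm_ring_1 ser)"
  by (rule ser_eqI) (simp add: coeff_sum sum_distrib_left)

section \<open>Order, locally finite sums and homogeneous components\<close>

definition order_ge :: "nat \<Rightarrow> 'a::comm_ring_1 ser \<Rightarrow> bool" where
  "order_ge n f \<longleftrightarrow> (\<forall>w. length w < n \<longrightarrow> coeff f w = 0)"

lemma order_geD: "order_ge n f \<Longrightarrow> length w < n \<Longrightarrow> coeff f w = 0"
  by (simp add: order_ge_def)

lemma order_ge_0 [simp]: "order_ge 0 f"
  and order_ge_zero [simp]: "order_ge n 0"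
  by (simp_all add: order_ge_def)

lemma order_ge_mono: "order_ge n f \<Longrightarrow> m \<le> n \<Longrightarrow> order_ge m f"
  by (simp add: order_ge_def)

lemma order_ge_add: "order_ge n f \<Longrightarrow> order_ge n g \<Longrightarrow> order_ge n (f + g)"
  and order_ge_diff: "order_ge n f \<Longrightarrow> order_ge n g \<Longrightarrow> order_ge n (f - g)"
  and order_ge_uminus: "order_ge n f \<Longrightarrow> order_ge n (- f)"
  and order_ge_smult: "order_ge n f \<Longrightarrow> order_ge n (smult c f)"
  by (simp_all add: order_ge_def)

lemma order_ge_mult:
  assumes "order_ge m f" "order_ge n g"
  shows "order_ge (m + n) (f * g)"
  unfolding order_ge_def
proof (intro allI impI)
  fix w :: "bool list"
  assume "length w < m + n"
  then have "coeff f (take i w) * coeff g (drop i w) = 0" if "i \<le> length w" for i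
    using assms that by (cases "i < m") (simp_all add: order_ge_def)
  then show "coeff (f * g) w = 0"
    by (simp add: coeff_mult)
qed

lemma order_ge_mult_left: "order_ge n g \<Longrightarrow> order_ge n (f * g)"
  using order_ge_mult[of 0 f n g] by simp

lemma order_ge_mult_right: "order_ge n f \<Longrightarrow> order_ge n (f * g)"
  using order_ge_mult[of n f 0 g] by simp

lemma order_ge_mult_both: "order_ge n f \<Longrightarrow> order_ge n (a * f * b)"
  by (intro order_ge_mult_left order_ge_mult_right)

lemma order_ge_power: "order_ge m f \<Longrightarrow> order_ge (n * m) (f ^ n)"
  by (induction n) (auto intro: order_ge_mult)

text \<open>Only meaningful when the n-th term has order at least n, so that every coefficient is a
  finite sum.\<close>

definition formal_sum :: "(nat \<Rightarrow> 'a::comm_ring_1 ser) \<Rightarrow> 'a ser" where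
  "formal_sum F = Ser (\<lambda>w. \<Sum>n\<le>length w. coeff (F n) w)"

lemma coeff_formal_sum:
  assumes "\<And>n. order_ge n (F n)" "length w \<le> N"
  shows "coeff (formal_sum F) w = (\<Sum>n\<le>N. coeff (F n) w)"
proof -
  have "(\<Sum>n\<le>N. coeff (F n) w) = (\<Sum>n\<le>length w. coeff (F n) w)"
    by (rule sum.mono_neutral_right) (use assms in \<open>auto simp: order_ge_def\<close>)
  then show ?thesis
    by (simp add: formal_sum_def)
qed

lemma order_ge_formal_sum: "(\<And>n. order_ge m (F n)) \<Longrightarrow> order_ge m (formal_sum F)"
  by (simp add: order_ge_def formal_sum_def)

lemma formal_sum_mult_right:
  assumes "\<And>n. order_ge n (F n)"
  shows "formal_sum F * g = formal_sum (\<lambda>n. F n * g)"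
proof (rule ser_eqI)
  fix w :: "bool list"
  have "coeff (formal_sum F * g) w
      = (\<Sum>i\<le>length w. (\<Sum>n\<le>length w. coeff (F n) (take i w)) * coeff g (drop i w))"
    unfolding coeff_mult by (intro sum.cong refl, subst coeff_formal_sum[OF assms]) auto
  also have "\<dots> = (\<Sum>i\<le>length w. \<Sum>n\<le>length w. coeff (F n) (take i w) * coeff g (drop i w))"
    by (simp add: sum_distrib_right)
  also have "\<dots> = (\<Sum>n\<le>length w. coeff (F n * g) w)"
    by (subst sum.swap) (simp add: coeff_mult)
  finally show "coeff (formal_sum F * g) w = coeff (formal_sum (\<lambda>n. F n * g)) w"
    by (simp add: formal_sum_def)
qed

lemma formal_sum_mult_left:
  assumes "\<And>n. order_ge n (F n)"
  shows "g * formal_sum F = formal_sum (\<lambda>n. g * F n)"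
proof (rule ser_eqI)
  fix w :: "bool list"
  have "coeff (g * formal_sum F) w
      = (\<Sum>i\<le>length w. coeff g (take i w) * (\<Sum>n\<le>length w. coeff (F n) (drop i w)))"
    unfolding coeff_mult by (intro sum.cong refl, subst coeff_formal_sum[OF assms]) auto
  also have "\<dots> = (\<Sum>i\<le>length w. \<Sum>n\<le>length w. coeff g (take i w) * coeff (F n) (drop i w))"
    by (simp add: sum_distrib_left)
  also have "\<dots> = (\<Sum>n\<le>length w. coeff (g * F n) w)"
    by (subst sum.swap) (simp add: coeff_mult)
  finally show "coeff (g * formal_sum F) w = coeff (formal_sum (\<lambda>n. g * F n)) w"
    by (simp add: formal_sum_def)
qed

lemma formal_sum_shift:
  assumes "\<And>n. order_ge n (F n)" "F 0 = 0"
  shows "formal_sum F = formal_sum (\<lambda>n. F (Suc n))"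
proof (rule ser_eqI)
  fix w :: "bool list"
  have "coeff (formal_sum F) w = (\<Sum>n\<le>Suc (length w). coeff (F n) w)"
    by (rule coeff_formal_sum[OF assms(1)]) simp
  also have "\<dots> = (\<Sum>n\<le>length w. coeff (F (Suc n)) w)"
    by (simp add: sum.atMost_Suc_shift assms(2) del: sum.atMost_Suc)
  finally show "coeff (formal_sum F) w = coeff (formal_sum (\<lambda>n. F (Suc n))) w"
    by (simp add: formal_sum_def)
qed

lemma formal_sum_double:
  assumes "\<And>i j. order_ge (i + j) (F i j)"
  shows "formal_sum (\<lambda>i. formal_sum (F i)) = formal_sum (\<lambda>n. \<Sum>i\<le>n. F i (n - i))"
proof (rule ser_eqI)
  fix w :: "bool list"
  let ?N = "length w"
  have inner: "order_ge j (F i j)" for i j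
    using assms by (rule order_ge_mono) simp
  have outer: "order_ge i (formal_sum (F i))" for i
    by (rule order_ge_formal_sum, rule order_ge_mono[OF assms]) simp
  have "coeff (formal_sum (\<lambda>i. formal_sum (F i))) w = (\<Sum>i\<le>?N. \<Sum>j\<le>?N. coeff (F i j) w)"
    by (subst coeff_formal_sum[OF outer, of w "length w"], simp,
        intro sum.cong refl, rule coeff_formal_sum[OF inner], simp)
  also have "\<dots> = (\<Sum>(i, j)\<in>{..?N} \<times> {..?N}. coeff (F i j) w)"
    by (simp add: sum.cartesian_product)
  also have "\<dots> = (\<Sum>(i, j)\<in>{(i, j). i + j \<le> ?N}. coeff (F i j) w)"
    by (rule sum.mono_neutral_right) (use order_geD[OF assms] in \<open>force simp: not_le\<close>)+
  also have "\<dots> = (\<Sum>n\<le>?N. \<Sum>i\<le>n. coeff (F i (n - i)) w)"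
    by (rule sum.triangle_reindex_eq)
  finally show "coeff (formal_sum (\<lambda>i. formal_sum (F i))) w
      = coeff (formal_sum (\<lambda>n. \<Sum>i\<le>n. F i (n - i))) w"
    by (simp add: formal_sum_def coeff_sum)
qed

abbreviation homog :: "nat \<Rightarrow> 'a::field ser \<Rightarrow> bool" where
  "homog d f \<equiv> homogeneous d (coeff f)"

definition component :: "nat \<Rightarrow> 'a::comm_ring_1 ser \<Rightarrow> 'a ser" where
  "component m f = Ser (\<lambda>w. if length w = m then coeff f w else 0)"

lemma coeff_component: "coeff (component m f) w = (if length w = m then coeff f w else 0)"
  by (simp add: component_def)

lemma homog_mult:
  assumes "homog a f" "homog b g"
  shows "homog (a + b) (f * g)"
  unfolding homogeneous_def
proof (intro allI impI)
  fix w :: "bool list"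
  assume "coeff (f * g) w \<noteq> 0"
  then obtain i where i: "i \<le> length w" "coeff f (take i w) * coeff g (drop i w) \<noteq> 0"
    unfolding coeff_mult by (metis (mono_tags, lifting) atMost_iff sum.neutral)
  then have "length (take i w) = a" "length (drop i w) = b"
    using assms by (auto simp: homogeneous_def)
  then show "length w = a + b"
    using i(1) by simp
qed

lemma homog_power:
  assumes "homog d f"
  shows "homog (n * d) (f ^ n)"
proof (induction n)
  case 0
  then show ?case
    by (simp add: homogeneous_def coeff_1)
next
  case (Suc n)
  then show ?case
    using homog_mult[OF assms Suc.IH] by simp
qed

lemma homog_order_ge: "homog d f \<Longrightarrow> k \<le> d \<Longrightarrow> order_ge k f"
  by (auto simp: homogeneous_def order_ge_def)

lemma homog_add: "homog d f \<Longrightarrow> homog d g \<Longrightarrow> homog d (f + g)"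
  unfolding homogeneous_def by (metis add.left_neutral coeff_add)

lemma homog_uminus: "homog d f \<Longrightarrow> homog d (- f)"
  and homog_smult: "homog d f \<Longrightarrow> homog d (smult c f)"
  and homog_component: "homog m (component m f)"
  by (auto simp: homogeneous_def coeff_component)

lemma component_homog: "homog d f \<Longrightarrow> component m f = (if m = d then f else 0)"
  by (rule ser_eqI) (auto simp: homogeneous_def coeff_component)

lemma component_0 [simp]: "component m 0 = 0"
  by (rule ser_eqI) (simp add: coeff_component)

lemma component_add: "component m (f + g) = component m f + component m g"
  and component_diff: "component m (f - g) = component m f - component m g"
  and component_smult: "component m (smult c f) = smult c (component m f)"
  by (rule ser_eqI; simp add: coeff_component)+

lemma component_eq_0: "order_ge (k + 1) f \<Longrightarrow> component k f = 0"
  by (rule ser_eqI) (simp add: coeff_component order_ge_def)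

lemma component_eq_if_order_ge: "order_ge (k + 1) (f - g) \<Longrightarrow> component k f = component k g"
  by (rule ser_eqI) (simp add: coeff_component order_ge_def)

lemma component_1: "1 \<le> k \<Longrightarrow> component k 1 = 0"
  by (rule ser_eqI) (auto simp: coeff_component coeff_1)

lemma component_formal_sum:
  assumes "\<And>n. order_ge n (F n)"
  shows "component m (formal_sum F) = (\<Sum>n\<le>m. component m (F n))"
  by (rule ser_eqI) (simp add: coeff_component coeff_sum coeff_formal_sum[OF assms])

lemma order_ge_sub_component:
  assumes "order_ge k (f - 1)" "1 \<le> k"
  shows "order_ge (k + 1) (f - 1 - component k f)"
  using assms by (auto simp: order_ge_def coeff_component coeff_1)

lemma coeff_homog_mult:
  assumes "homog d b"
  shows "coeff (b * f) w = (if d \<le> length w then coeff b (take d w) * coeff f (drop d w) else 0)"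
    and "coeff (f * b) w
      = (if d \<le> length w then coeff f (take (length w - d) w) * coeff b (drop (length w - d) w) else 0)"
proof -
  have "coeff b (take i w) = 0" if "i \<le> length w" "i \<noteq> d" for i
    using assms that by (auto simp: homogeneous_def)
  then have "coeff (b * f) w
      = (\<Sum>i\<in>(if d \<le> length w then {d} else {}). coeff b (take i w) * coeff f (drop i w))"
    unfolding coeff_mult by (intro sum.mono_neutral_right) auto
  then show "coeff (b * f) w = (if d \<le> length w then coeff b (take d w) * coeff f (drop d w) else 0)"
    by simp
  have "coeff (f * b) w = (\<Sum>i\<in>(if d \<le> length w then {length w - d} else {}).
      coeff f (take i w) * coeff b (drop i w))"
    unfolding coeff_mult
    by (rule sum.mono_neutral_right) (use assms in \<open>auto simp: homogeneous_def\<close>)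
  then show "coeff (f * b) w
      = (if d \<le> length w then coeff f (take (length w - d) w) * coeff b (drop (length w - d) w) else 0)"
    by simp
qed

lemma component_homog_mult:
  assumes "homog d b"
  shows "component m (b * f) = (if d \<le> m then b * component (m - d) f else 0)"
    and "component m (f * b) = (if d \<le> m then component (m - d) f * b else 0)"
  by (rule ser_eqI; auto simp: coeff_component coeff_homog_mult[OF assms])+

section \<open>The exponential\<close>

definition euler :: "'a::comm_ring_1 ser \<Rightarrow> 'a ser" where
  "euler f = Ser (\<lambda>w. of_nat (length w) * coeff f w)"

lemma coeff_euler: "coeff (euler f) w = of_nat (length w) * coeff f w"
  by (simp add: euler_def)

lemma euler_diff: "euler (f - g) = euler f - euler g"
  and euler_smult: "euler (smult c f) = smult c (euler f)"
  and euler_1: "euler 1 = 0"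
  by (rule ser_eqI; simp add: coeff_euler coeff_1 algebra_simps)+

lemma euler_formal_sum: "euler (formal_sum F) = formal_sum (\<lambda>n. euler (F n))"
  by (rule ser_eqI) (simp add: coeff_euler formal_sum_def sum_distrib_left)

lemma euler_homog:
  assumes "homog d f"
  shows "euler f = smult (of_nat d) f"
proof (rule ser_eqI)
  fix w
  show "coeff (euler f) w = coeff (smult (of_nat d) f) w"
    using assms by (cases "coeff f w = 0") (auto simp: coeff_euler homogeneous_def)
qed

lemma order_ge_euler: "order_ge k f \<Longrightarrow> order_ge k (euler f)"
  by (simp add: order_ge_def coeff_euler)

lemma component_euler: "component k (euler f) = smult (of_nat k) (component k f)"
  by (rule ser_eqI) (simp add: coeff_component coeff_euler)

lemma euler_mult: "euler (f * g) = euler f * g + f * euler g"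
proof (rule ser_eqI)
  fix w :: "bool list"
  have "coeff (euler (f * g)) w
      = (\<Sum>i\<le>length w. of_nat (length w) * (coeff f (take i w) * coeff g (drop i w)))"
    by (simp add: coeff_euler coeff_mult sum_distrib_left)
  also have "\<dots> = (\<Sum>i\<le>length w. (of_nat (length (take i w)) * coeff f (take i w)) * coeff g (drop i w)
      + coeff f (take i w) * (of_nat (length (drop i w)) * coeff g (drop i w)))"
  proof (rule sum.cong[OF refl])
    fix i
    assume "i \<in> {..length w}"
    then have "of_nat (length w) = (of_nat (length (take i w)) + of_nat (length (drop i w)) :: 'a)"
      by (simp flip: of_nat_add)
    then show "of_nat (length w) * (coeff f (take i w) * coeff g (drop i w))
        = of_nat (length (take i w)) * coeff f (take i w) * coeff g (drop i w)
          + coeff f (take i w) * (of_nat (length (drop i w)) * coeff g (drop i w))"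
      by (simp add: algebra_simps)
  qed
  also have "\<dots> = coeff (euler f * g + f * euler g) w"
    by (simp only: coeff_euler coeff_mult coeff_add sum.distrib)
  finally show "coeff (euler (f * g)) w = coeff (euler f * g + f * euler g) w" .
qed

lemma eq_1_if_euler_eq_0:
  fixes g :: "'a::field_char_0 ser"
  assumes "euler g = 0" "coeff g [] = 1"
  shows "g = 1"
proof (rule ser_eqI)
  fix w :: "bool list"
  have "of_nat (length w) * coeff g w = 0"
    using arg_cong[OF assms(1), of "\<lambda>f. coeff f w"] by (simp add: coeff_euler)
  then show "coeff g w = coeff 1 w"
    using assms(2) by (cases w) (simp_all del: of_nat_Suc)
qed

definition ser_exp :: "'a::field ser \<Rightarrow> 'a ser" where
  "ser_exp a = Ser (\<lambda>w. \<Sum>n\<le>length w. coeff (a ^ n) w / of_nat (fact n))"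

definition exp_term :: "'a::field ser \<Rightarrow> nat \<Rightarrow> 'a ser" where
  "exp_term a n = smult (1 / of_nat (fact n)) (a ^ n)"

lemma order_ge_exp_term: "order_ge 1 a \<Longrightarrow> order_ge n (exp_term a n)"
  unfolding exp_term_def by (rule order_ge_smult) (use order_ge_power[of 1 a n] in simp)

lemma ser_exp_eq_formal_sum: "order_ge 1 a \<Longrightarrow> ser_exp a = formal_sum (exp_term a)"
  by (rule ser_eqI) (simp add: ser_exp_def formal_sum_def exp_term_def)

lemma coeff_ser_exp_Nil [simp]: "coeff (ser_exp a) [] = 1"
  by (simp add: ser_exp_def)

lemma ser_exp_commute:
  assumes "order_ge 1 a"
  shows "a * ser_exp a = ser_exp a * a"
proof -
  have "a * exp_term a n = exp_term a n * a" for n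
    by (simp add: exp_term_def power_commutes)
  then show ?thesis
    using assms by (simp add: ser_exp_eq_formal_sum formal_sum_mult_left formal_sum_mult_right
        order_ge_exp_term)
qed

lemma smult_formal_sum: "smult c (formal_sum F) = formal_sum (\<lambda>n. smult c (F n))"
  by (rule ser_eqI) (simp add: formal_sum_def sum_distrib_left)

lemma euler_ser_exp:
  fixes a :: "'a::field_char_0 ser"
  assumes "homog d a" "1 \<le> d"
  shows "euler (ser_exp a) = smult (of_nat d) (a * ser_exp a)"
proof -
  have a: "order_ge 1 a"
    using assms by (rule homog_order_ge)
  have step: "euler (exp_term a (Suc n)) = smult (of_nat d) (a * exp_term a n)" for n
  proof -
    have "of_nat (Suc n * d) / of_nat (fact (Suc n)) = (of_nat d / of_nat (fact n) :: 'a)"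
      by (simp only: fact_Suc of_nat_mult) (simp del: of_nat_Suc)
    then show ?thesis
      using euler_homog[OF homog_power[OF assms(1), of "Suc n"]]
      by (simp add: exp_term_def euler_smult del: of_nat_Suc)
  qed
  have "euler (ser_exp a) = formal_sum (\<lambda>n. euler (exp_term a n))"
    by (simp add: ser_exp_eq_formal_sum[OF a] euler_formal_sum)
  also have "\<dots> = formal_sum (\<lambda>n. euler (exp_term a (Suc n)))"
    by (rule formal_sum_shift)
      (simp_all add: order_ge_euler order_ge_exp_term[OF a], simp add: exp_term_def euler_1)
  also have "\<dots> = smult (of_nat d) (a * ser_exp a)"
    by (simp add: step ser_exp_eq_formal_sum[OF a] formal_sum_mult_left order_ge_exp_term[OF a]
        smult_formal_sum)
  finally show ?thesis .
qed

lemma ser_exp_minus: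
  fixes a :: "'a::field_char_0 ser"
  assumes "homog d a" "1 \<le> d"
  shows "ser_exp a * ser_exp (- a) = 1"
proof (rule eq_1_if_euler_eq_0)
  have "euler (ser_exp a * ser_exp (- a))
      = smult (of_nat d) (a * ser_exp a * ser_exp (- a)) - smult (of_nat d) (ser_exp a * a * ser_exp (- a))"
    by (simp add: euler_mult euler_ser_exp[OF assms] euler_ser_exp[OF homog_uminus[OF assms(1)] assms(2)]
        mult.assoc)
  also have "\<dots> = smult (of_nat d) ((a * ser_exp a - ser_exp a * a) * ser_exp (- a))"
    by (simp add: smult_diff_right left_diff_distrib)
  finally show "euler (ser_exp a * ser_exp (- a)) = 0"
    by (simp add: ser_exp_commute[OF homog_order_ge[OF assms]])
qed (simp add: coeff_mult_Nil)

lemma order_ge_ser_exp_sub: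
  fixes a :: "'a::field ser"
  assumes "order_ge k a" "1 \<le> k"
  shows "order_ge (2 * k) (ser_exp a - 1 - a)"
  unfolding order_ge_def
proof (intro allI impI)
  fix w :: "bool list"
  assume w: "length w < 2 * k"
  have a: "order_ge 1 a"
    using assms by (rule order_ge_mono)
  have "coeff (ser_exp a) w = (\<Sum>n\<le>Suc (length w). coeff (exp_term a n) w)"
    unfolding ser_exp_eq_formal_sum[OF a]
    by (rule coeff_formal_sum) (simp_all add: order_ge_exp_term[OF a])
  also have "\<dots> = (\<Sum>n\<in>{0, 1}. coeff (exp_term a n) w)"
  proof (rule sum.mono_neutral_right)
    show "\<forall>n\<in>{..Suc (length w)} - {0, 1}. coeff (exp_term a n) w = 0"
    proof
      fix n
      assume "n \<in> {..Suc (length w)} - {0, 1}"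
      then have "length w < n * k"
        using w by (auto intro: less_le_trans[of _ "2 * k"])
      then show "coeff (exp_term a n) w = 0"
        by (simp add: exp_term_def order_geD[OF order_ge_power[OF assms(1)]])
    qed
  qed auto
  also have "\<dots> = coeff 1 w + coeff a w"
    by (simp add: exp_term_def)
  finally show "coeff (ser_exp a - 1 - a) w = 0"
    by simp
qed

lemma order_ge_ser_exp_sub_1:
  fixes a :: "'a::field ser"
  assumes "order_ge k a" "1 \<le> k"
  shows "order_ge k (ser_exp a - 1)"
proof -
  have "order_ge k (ser_exp a - 1 - a)"
    using order_ge_ser_exp_sub[OF assms] by (rule order_ge_mono) simp
  then show ?thesis
    using order_ge_add[OF _ assms(1)] by fastforce
qed

section \<open>Lie series\<close>

lemma ps_add_eq: "ps_add f g = coeff (Ser f + Ser g)"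
  and ps_smult_eq: "ps_smult c f = coeff (smult c (Ser f))"
  and ps_mult_eq: "ps_mult f g = coeff (Ser f * Ser g)"
  and ps_comm_eq: "ps_comm f g = coeff (Ser f * Ser g - Ser g * Ser f)"
  and ps_one_eq: "ps_one = coeff (1 :: 'a::field ser)"
  by (simp_all add: fun_eq_iff ps_add_def ps_smult_def ps_mult_def ps_comm_def ps_one_def
      coeff_mult coeff_1)

lemma ps_exp_eq: "ps_exp f = coeff (ser_exp (Ser f))"
proof -
  have "ps_pow f n = coeff (Ser f ^ n)" for n
    by (induction n) (simp_all add: ps_pow_def ps_one_eq ps_mult_eq coeff_inverse)
  then show ?thesis
    by (simp add: ps_exp_def ser_exp_def)
qed

lemma ps_prod_list_eq: "ps_prod_list fs = coeff (prod_list (map Ser fs))"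
  by (induction fs) (simp_all add: ps_prod_list_def ps_one_eq ps_mult_eq coeff_inverse)

definition is_lie :: "'a::field ser \<Rightarrow> bool" where
  "is_lie f \<longleftrightarrow> coeff f \<in> lie_polys"

definition ser_X :: "'a::field ser" where
  "ser_X = Ser ps_X"

definition ser_Y :: "'a::field ser" where
  "ser_Y = Ser ps_Y"

lemma is_lie_X: "is_lie ser_X"
  and is_lie_Y: "is_lie ser_Y"
  by (simp_all add: is_lie_def ser_X_def ser_Y_def lie_X lie_Y)

lemma is_lie_add: "is_lie f \<Longrightarrow> is_lie g \<Longrightarrow> is_lie (f + g)"
  using lie_add[of "coeff f" "coeff g"] by (simp add: is_lie_def ps_add_eq coeff_inverse)

lemma is_lie_smult: "is_lie f \<Longrightarrow> is_lie (smult c f)"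
  using lie_smult[of "coeff f" c] by (simp add: is_lie_def ps_smult_eq coeff_inverse)

lemma is_lie_commutator: "is_lie f \<Longrightarrow> is_lie g \<Longrightarrow> is_lie (f * g - g * f)"
  using lie_comm[of "coeff f" "coeff g"] by (simp add: is_lie_def ps_comm_eq coeff_inverse)

lemma is_lie_0: "is_lie (0 :: 'a::field ser)"
  using is_lie_smult[OF is_lie_X, of 0] by simp

lemma is_lie_uminus: "is_lie f \<Longrightarrow> is_lie (- f)"
  using is_lie_smult[of f "-1"] by (simp add: smult_minus_left)

lemma is_lie_sum: "(\<And>i. i \<in> A \<Longrightarrow> is_lie (f i)) \<Longrightarrow> is_lie (\<Sum>i\<in>A. f i)"
  by (induction A rule: infinite_finite_induct) (auto intro: is_lie_add is_lie_0)

definition lie_series :: "'a::field ser \<Rightarrow> bool" where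
  "lie_series z \<longleftrightarrow> (\<forall>m. is_lie (component m z))"

lemma lie_series_0: "lie_series 0"
  by (simp add: lie_series_def is_lie_0)

lemma lie_series_add: "lie_series f \<Longrightarrow> lie_series g \<Longrightarrow> lie_series (f + g)"
  by (simp add: lie_series_def component_add is_lie_add)

lemma lie_series_smult: "lie_series f \<Longrightarrow> lie_series (smult c f)"
  by (simp add: lie_series_def component_smult is_lie_smult)

lemma lie_series_homog: "is_lie b \<Longrightarrow> homog d b \<Longrightarrow> lie_series b"
  by (simp add: lie_series_def component_homog is_lie_0)

primrec ad_pow :: "'a::comm_ring_1 ser \<Rightarrow> nat \<Rightarrow> 'a ser \<Rightarrow> 'a ser" where
  "ad_pow b 0 z = z"
| "ad_pow b (Suc n) z = b * ad_pow b n z - ad_pow b n z * b"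

lemma is_lie_ad_pow: "is_lie b \<Longrightarrow> is_lie z \<Longrightarrow> is_lie (ad_pow b n z)"
  by (induction n) (simp_all add: is_lie_commutator)

lemma order_ge_ad_pow: "order_ge d b \<Longrightarrow> order_ge (n * d) (ad_pow b n z)"
proof (induction n)
  case (Suc n)
  then have "order_ge (d + n * d) (b * ad_pow b n z)" "order_ge (n * d + d) (ad_pow b n z * b)"
    by (simp_all add: order_ge_mult)
  then show ?case
    by (simp add: order_ge_diff add.commute)
qed simp

lemma component_ad_pow:
  assumes "homog d b"
  shows "component m (ad_pow b n z) = (if n * d \<le> m then ad_pow b n (component (m - n * d) z) else 0)"
proof (induction n arbitrary: m)
  case (Suc n)
  then show ?case
    by (cases "d \<le> m")
      (simp_all add: component_diff component_homog_mult[OF assms] diff_diff_add add.commute le_diff_conv2)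
qed simp

lemma ad_pow_binomial:
  "ad_pow b n z = (\<Sum>i\<le>n. smult (of_nat (n choose i)) (b ^ i * z * (- b) ^ (n - i)))"
proof (induction n)
  case (Suc n)
  define T where "T i j = b ^ i * z * (- b) ^ j" for i j
  have left: "b * smult c (T i j) = smult c (T (Suc i) j)" for c i j
    by (simp add: T_def mult.assoc)
  have right: "smult c (T i j) * (- b) = smult c (T i (Suc j))" for c i j
    by (simp only: T_def smult_mult_left mult.assoc power_Suc2)
  have "ad_pow b (Suc n) z = (\<Sum>i\<le>n. b * smult (of_nat (n choose i)) (T i (n - i)))
      + (\<Sum>i\<le>n. smult (of_nat (n choose i)) (T i (n - i)) * (- b))"
    by (simp add: Suc.IH sum_distrib_left sum_distrib_right sum_negf T_def
        del: mult_smult_right smult_mult_left)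
  also have "\<dots> = (\<Sum>i\<le>n. smult (of_nat (n choose i)) (T (Suc i) (n - i)))
      + (\<Sum>i\<le>n. smult (of_nat (n choose i)) (T i (Suc (n - i))))"
    by (simp only: left right)
  also have "\<dots> = (\<Sum>i\<le>Suc n. smult (of_nat (if i = 0 then 0 else n choose (i - 1))) (T i (Suc n - i)))
      + (\<Sum>i\<le>Suc n. smult (of_nat (n choose i)) (T i (Suc n - i)))"
  proof -
    have "(\<Sum>i\<le>n. smult (of_nat (n choose i)) (T (Suc i) (n - i)))
        = (\<Sum>i\<le>Suc n. smult (of_nat (if i = 0 then 0 else n choose (i - 1))) (T i (Suc n - i)))"
      by (simp add: sum.atMost_Suc_shift del: sum.atMost_Suc)
    moreover have "(\<Sum>i\<le>n. smult (of_nat (n choose i)) (T i (Suc (n - i))))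
        = (\<Sum>i\<le>Suc n. smult (of_nat (n choose i)) (T i (Suc n - i)))"
      by (simp add: Suc_diff_le binomial_eq_0)
    ultimately show ?thesis
      by (simp only:)
  qed
  also have "\<dots> = (\<Sum>i\<le>Suc n. smult (of_nat (Suc n choose i)) (T i (Suc n - i)))"
  proof -
    have pascal: "smult (of_nat (if i = 0 then 0 else n choose (i - 1))) t + smult (of_nat (n choose i)) t
        = smult (of_nat (Suc n choose i)) t" for i and t :: "'a ser"
      by (cases i) (simp_all add: smult_add_left[symmetric])
    show ?thesis
      by (simp only: sum.distrib[symmetric] pascal)
  qed
  finally show ?case
    by (simp add: T_def)
qed simp
lemma ser_exp_conj:
  fixes b :: "'a::field_char_0 ser"
  assumes b: "order_ge 1 b"
  shows "ser_exp b * z * ser_exp (- b) = formal_sum (\<lambda>n. smult (1 / of_nat (fact n)) (ad_pow b n z))"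
proof -
  have b': "order_ge 1 (- b)"
    using b by (rule order_ge_uminus)
  have left: "order_ge i (exp_term b i * z)" for i
    by (rule order_ge_mult_right[OF order_ge_exp_term[OF b]])
  have "ser_exp b * z * ser_exp (- b) = formal_sum (\<lambda>i. exp_term b i * z) * formal_sum (exp_term (- b))"
    by (simp add: ser_exp_eq_formal_sum[OF b] ser_exp_eq_formal_sum[OF b']
        formal_sum_mult_right[OF order_ge_exp_term[OF b]])
  also have "\<dots> = formal_sum (\<lambda>i. formal_sum (\<lambda>j. exp_term b i * z * exp_term (- b) j))"
    by (subst formal_sum_mult_right[OF left], subst formal_sum_mult_left[OF order_ge_exp_term[OF b']])
      (rule refl)
  also have "\<dots> = formal_sum (\<lambda>n. \<Sum>i\<le>n. exp_term b i * z * exp_term (- b) (n - i))"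
    by (rule formal_sum_double)
      (rule order_ge_mult[OF left order_ge_exp_term[OF b']])
  also have "\<dots> = formal_sum (\<lambda>n. smult (1 / of_nat (fact n)) (ad_pow b n z))"
  proof -
    have "exp_term b i * z * exp_term (- b) (n - i)
        = smult (1 / of_nat (fact n)) (smult (of_nat (n choose i)) (b ^ i * z * (- b) ^ (n - i)))"
      if "i \<le> n" for i n
      using that by (simp add: exp_term_def binomial_fact mult.commute)
    then show ?thesis
      by (simp add: ad_pow_binomial smult_sum)
  qed
  finally show ?thesis .
qed

lemma lie_series_conj:
  fixes b :: "'a::field_char_0 ser"
  assumes b: "homog d b" "1 \<le> d" "is_lie b" and z: "lie_series z"
  shows "lie_series (ser_exp b * z * ser_exp (- b))"
  unfolding lie_series_def
proof
  fix m
  have "order_ge n (smult (1 / of_nat (fact n)) (ad_pow b n z))" for n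
    using order_ge_ad_pow[OF homog_order_ge[OF b(1,2)], of n z] by (simp add: order_ge_smult)
  then have "component m (ser_exp b * z * ser_exp (- b))
      = (\<Sum>n\<le>m. smult (1 / of_nat (fact n)) (component m (ad_pow b n z)))"
    by (simp add: ser_exp_conj[OF homog_order_ge[OF b(1,2)]] component_formal_sum component_smult)
  also have "\<dots> = (\<Sum>n\<le>m. smult (1 / of_nat (fact n))
      (if n * d \<le> m then ad_pow b n (component (m - n * d) z) else 0))"
    by (simp add: component_ad_pow[OF b(1)])
  finally show "is_lie (component m (ser_exp b * z * ser_exp (- b)))"
    using b(3) z by (auto simp: lie_series_def intro!: is_lie_sum is_lie_smult is_lie_ad_pow is_lie_0)
qed

section \<open>Products of exponentials\<close>

definition exp_prod :: "'a::field ser list \<Rightarrow> 'a ser" where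
  "exp_prod L = prod_list (map ser_exp L)"

definition exp_prod_inv :: "'a::field ser list \<Rightarrow> 'a ser" where
  "exp_prod_inv L = exp_prod (map uminus (rev L))"

definition pos_homog :: "'a::field ser \<Rightarrow> bool" where
  "pos_homog a \<longleftrightarrow> (\<exists>d\<ge>1. homog d a)"

lemma exp_prod_Nil [simp]: "exp_prod [] = 1"
  and exp_prod_Cons [simp]: "exp_prod (a # L) = ser_exp a * exp_prod L"
  and exp_prod_append: "exp_prod (L @ M) = exp_prod L * exp_prod M"
  by (simp_all add: exp_prod_def)

lemma exp_prod_inv_Nil [simp]: "exp_prod_inv [] = 1"
  and exp_prod_inv_Cons [simp]: "exp_prod_inv (a # L) = exp_prod_inv L * ser_exp (- a)"
  and exp_prod_inv_append: "exp_prod_inv (L @ M) = exp_prod_inv M * exp_prod_inv L"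
  by (simp_all add: exp_prod_inv_def exp_prod_append)

lemma coeff_exp_prod_Nil [simp]: "coeff (exp_prod L) [] = 1"
  by (induction L) (simp_all add: coeff_mult_Nil)

lemma pos_homog_uminus: "pos_homog a \<Longrightarrow> pos_homog (- a)"
  by (auto simp: pos_homog_def intro: homog_uminus)

lemma order_ge_1_if_pos_homog: "pos_homog a \<Longrightarrow> order_ge 1 a"
  by (auto simp: pos_homog_def intro: homog_order_ge)

lemma exp_prod_mult_inv:
  fixes L :: "'a::field_char_0 ser list"
  shows "\<forall>a\<in>set L. pos_homog a \<Longrightarrow> exp_prod L * exp_prod_inv L = 1"
proof (induction L)
  case (Cons a L)
  obtain d where "homog d a" "1 \<le> d"
    using Cons.prems by (auto simp: pos_homog_def)
  moreover have "exp_prod (a # L) * exp_prod_inv (a # L)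
      = ser_exp a * (exp_prod L * exp_prod_inv L) * ser_exp (- a)"
    by (simp add: mult.assoc)
  ultimately show ?case
    using Cons by (simp add: ser_exp_minus)
qed simp

lemma exp_prod_inv_mult:
  fixes L :: "'a::field_char_0 ser list"
  shows "\<forall>a\<in>set L. pos_homog a \<Longrightarrow> exp_prod_inv L * exp_prod L = 1"
proof (induction L)
  case (Cons a L)
  obtain d where "homog d (- a)" "1 \<le> d"
    using Cons.prems by (auto simp: pos_homog_def intro: homog_uminus)
  moreover have "exp_prod_inv (a # L) * exp_prod (a # L)
      = exp_prod_inv L * (ser_exp (- a) * ser_exp (- (- a))) * exp_prod L"
    by (simp add: mult.assoc)
  ultimately show ?case
    using Cons by (simp only: ser_exp_minus) simp
qed simp

lemma order_ge_exp_prod_sub_1: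
  fixes L :: "'a::field ser list"
  assumes "\<forall>a\<in>set L. order_ge k a" "1 \<le> k"
  shows "order_ge k (exp_prod L - 1)"
  using assms(1)
proof (induction L)
  case (Cons a L)
  have "exp_prod (a # L) - 1 = (ser_exp a - 1) * exp_prod L + (exp_prod L - 1)"
    by (simp add: algebra_simps)
  then show ?case
    using Cons order_ge_ser_exp_sub_1[OF _ assms(2), of a]
    by (metis list.set_intros order_ge_add order_ge_mult_right)
qed simp

lemma order_ge_exp_prod_sub_sum:
  fixes L :: "'a::field ser list"
  assumes "\<forall>a\<in>set L. order_ge 1 a"
  shows "order_ge 2 (exp_prod L - 1 - sum_list L)"
  using assms
proof (induction L)
  case (Cons a L)
  have "exp_prod (a # L) - 1 - sum_list (a # L)
      = (ser_exp a - 1 - a) * exp_prod L + a * (exp_prod L - 1) + (exp_prod L - 1 - sum_list L)"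
    by (simp add: algebra_simps)
  moreover have "order_ge 2 ((ser_exp a - 1 - a) * exp_prod L)"
    using order_ge_ser_exp_sub[of 1 a] Cons.prems by (simp add: order_ge_mult_right)
  moreover have "order_ge 2 (a * (exp_prod L - 1))"
    using Cons.prems order_ge_exp_prod_sub_1[of L 1] order_ge_mult[of 1 a 1 "exp_prod L - 1"]
    by (simp add: numeral_2_eq_2)
  moreover have "order_ge 2 (exp_prod L - 1 - sum_list L)"
    using Cons by simp
  ultimately show ?case
    by (metis order_ge_add)
qed simp

lemma lie_series_euler_exp_prod:
  fixes L :: "'a::field_char_0 ser list"
  assumes "\<forall>a\<in>set L. is_lie a \<and> pos_homog a"
  shows "lie_series (euler (exp_prod L) * exp_prod_inv L)"
  using assms
proof (induction L)
  case Nil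
  then show ?case
    by (simp add: euler_1 lie_series_0)
next
  case (Cons a L)
  then obtain d where a: "homog d a" "1 \<le> d" "is_lie a"
    by (auto simp: pos_homog_def)
  have inv: "exp_prod L * exp_prod_inv L = 1"
    using Cons.prems by (simp add: exp_prod_mult_inv)
  have "euler (exp_prod (a # L)) * exp_prod_inv (a # L)
      = smult (of_nat d) (a * ser_exp a * (exp_prod L * exp_prod_inv L) * ser_exp (- a))
        + ser_exp a * (euler (exp_prod L) * exp_prod_inv L) * ser_exp (- a)"
    by (simp add: euler_mult euler_ser_exp[OF a(1,2)] distrib_right mult.assoc)
  also have "\<dots> = smult (of_nat d) a + ser_exp a * (euler (exp_prod L) * exp_prod_inv L) * ser_exp (- a)"
    by (simp add: inv mult.assoc ser_exp_minus[OF a(1,2)])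
  finally show ?case
    using Cons a
    by (simp add: lie_series_add lie_series_smult lie_series_homog lie_series_conj)
qed

text \<open>In degree k, the Lie series euler P * P^(-1) equals k times the component of P, because
  P^(-1) - 1 has no constant term and euler P starts in degree k.\<close>

lemma is_lie_component_exp_prod:
  fixes L :: "'a::field_char_0 ser list"
  assumes L: "\<forall>a\<in>set L. is_lie a \<and> pos_homog a" and k: "order_ge k (exp_prod L - 1)" "1 \<le> k"
  shows "is_lie (component k (exp_prod L))"
proof -
  define P where "P = exp_prod L"
  define Z where "Z = euler P * exp_prod_inv L"
  have euler_P: "order_ge k (euler P)"
    using order_ge_euler[OF k(1)] by (simp add: P_def euler_diff euler_1)
  have "order_ge 1 (exp_prod_inv L - 1)"
    unfolding exp_prod_inv_def
    by (rule order_ge_exp_prod_sub_1)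
      (use L in \<open>auto intro!: order_ge_1_if_pos_homog pos_homog_uminus simp del: One_nat_def\<close>)
  then have "order_ge (k + 1) (euler P * (exp_prod_inv L - 1))"
    by (rule order_ge_mult[OF euler_P])
  then have "component k Z = component k (euler P)"
    by (intro component_eq_if_order_ge) (simp add: Z_def right_diff_distrib)
  also have "\<dots> = smult (of_nat k) (component k P)"
    by (rule component_euler)
  finally have "component k P = smult (1 / of_nat k) (component k Z)"
    using k(2) by simp
  moreover have "is_lie (component k Z)"
    using lie_series_euler_exp_prod[OF L] by (simp add: lie_series_def Z_def P_def)
  ultimately show ?thesis
    by (simp add: P_def is_lie_smult)
qed

section \<open>Construction of the factors\<close>

definition half_X :: "'a::field ser" where
  "half_X = smult (1 / 2) ser_X"

definition half_Y :: "'a::field ser" where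
  "half_Y = smult (1 / 2) ser_Y"

definition X_plus_Y :: "'a::field ser" where
  "X_plus_Y = ser_X + ser_Y"

definition left_factors :: "'a::field ser list \<Rightarrow> 'a ser list" where
  "left_factors L = [half_X, half_Y] @ L"

definition right_factors :: "'a::field ser list \<Rightarrow> 'a ser list" where
  "right_factors L = rev L @ [half_Y, half_X]"

definition middle :: "'a::field ser list \<Rightarrow> 'a ser" where
  "middle L = exp_prod_inv (left_factors L) * ser_exp X_plus_Y * exp_prod_inv (right_factors L)"

lemma homog_X: "homog 1 (ser_X :: 'a::field ser)"
  and homog_Y: "homog 1 (ser_Y :: 'a::field ser)"
  by (simp_all add: homogeneous_def ser_X_def ser_Y_def ps_X_def ps_Y_def)

lemma lie_half_X: "is_lie half_X \<and> pos_homog half_X"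
  and lie_half_Y: "is_lie half_Y \<and> pos_homog half_Y"
  and lie_X_plus_Y: "is_lie X_plus_Y \<and> pos_homog X_plus_Y"
  using homog_X homog_Y
  by (auto simp: half_X_def half_Y_def X_plus_Y_def pos_homog_def
      intro!: is_lie_smult is_lie_add is_lie_X is_lie_Y homog_smult homog_add)

lemma sym_partial_eq:
  "sym_partial C N = coeff (exp_prod (left_factors (map (\<lambda>j. Ser (C j)) [2..<Suc N])
    @ right_factors (map (\<lambda>j. Ser (C j)) [2..<Suc N])))"
  by (simp add: sym_partial_def ps_prod_list_eq ps_exp_eq ps_smult_eq coeff_inverse exp_prod_def
      left_factors_def right_factors_def rev_map half_X_def half_Y_def ser_X_def ser_Y_def o_def
      del: upt_Suc)

lemma ps_exp_X_plus_Y: "ps_exp (ps_add ps_X ps_Y) = coeff (ser_exp (X_plus_Y :: 'a::field ser))"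
  by (simp add: ps_exp_eq ps_add_eq coeff_inverse X_plus_Y_def ser_X_def ser_Y_def)

lemma middle_eq_exp_prod:
  "middle L = exp_prod (map uminus (rev (left_factors L)) @ [X_plus_Y] @ map uminus (rev (right_factors L)))"
  by (simp add: middle_def exp_prod_inv_def exp_prod_append mult.assoc)

lemma middle_snoc: "middle (L @ [c]) = ser_exp (- c) * middle L * ser_exp (- c)"
  by (simp add: middle_def left_factors_def right_factors_def exp_prod_inv_append mult.assoc)

lemma pos_homog_left_right_factors:
  assumes "\<forall>a\<in>set L. pos_homog a"
  shows "\<forall>a\<in>set (left_factors L). pos_homog a" and "\<forall>a\<in>set (right_factors L). pos_homog a"
  using assms lie_half_X lie_half_Y by (auto simp: left_factors_def right_factors_def)

lemma ser_exp_X_plus_Y_eq: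
  fixes L :: "'a::field_char_0 ser list"
  assumes "\<forall>a\<in>set L. pos_homog a"
  shows "ser_exp X_plus_Y = exp_prod (left_factors L) * middle L * exp_prod (right_factors L)"
proof -
  have "exp_prod (left_factors L) * middle L * exp_prod (right_factors L)
      = (exp_prod (left_factors L) * exp_prod_inv (left_factors L)) * ser_exp X_plus_Y
        * (exp_prod_inv (right_factors L) * exp_prod (right_factors L))"
    by (simp add: middle_def mult.assoc)
  then show ?thesis
    using pos_homog_left_right_factors[OF assms] by (simp add: exp_prod_mult_inv exp_prod_inv_mult)
qed

lemma order_ge_middle_iff:
  fixes L :: "'a::field_char_0 ser list"
  assumes "\<forall>a\<in>set L. pos_homog a"
  shows "order_ge k (middle L - T)
    \<longleftrightarrow> order_ge k (ser_exp X_plus_Y - exp_prod (left_factors L) * T * exp_prod (right_factors L))"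
proof -
  let ?F = "exp_prod (left_factors L)" and ?B = "exp_prod (right_factors L)"
  let ?F' = "exp_prod_inv (left_factors L)" and ?B' = "exp_prod_inv (right_factors L)"
  have "ser_exp X_plus_Y - ?F * T * ?B = ?F * (middle L - T) * ?B"
    by (simp add: ser_exp_X_plus_Y_eq[OF assms] algebra_simps)
  moreover have "?F' * (?F * (middle L - T) * ?B) * ?B' = (?F' * ?F) * (middle L - T) * (?B * ?B')"
    by (simp add: mult.assoc)
  then have "middle L - T = ?F' * (?F * (middle L - T) * ?B) * ?B'"
    using pos_homog_left_right_factors[OF assms] by (simp add: exp_prod_mult_inv exp_prod_inv_mult)
  ultimately show ?thesis
    by (metis order_ge_mult_both)
qed

lemma X_plus_Y_eq_halves: "X_plus_Y = (half_X + half_X) + (half_Y + half_Y :: 'a::field_char_0 ser)"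
  by (simp add: X_plus_Y_def half_X_def half_Y_def smult_add_left[symmetric])

lemma order_ge_middle_Nil: "order_ge 2 (middle [] - (1 :: 'a::field_char_0 ser))"
proof -
  let ?M = "map uminus (rev (left_factors [])) @ [X_plus_Y] @ map uminus (rev (right_factors []))
    :: 'a ser list"
  have "order_ge 2 (exp_prod ?M - 1 - sum_list ?M)"
    by (rule order_ge_exp_prod_sub_sum)
      (use lie_half_X lie_half_Y lie_X_plus_Y in \<open>auto simp: left_factors_def right_factors_def
        intro!: order_ge_1_if_pos_homog pos_homog_uminus simp del: One_nat_def\<close>)
  moreover have "sum_list ?M = 0"
    by (simp add: left_factors_def right_factors_def X_plus_Y_eq_halves)
  ultimately show ?thesis
    by (simp only: middle_eq_exp_prod diff_zero)
qed

lemma order_ge_exp_sandwich: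
  fixes c :: "'a::field ser"
  assumes c: "homog k c" "1 \<le> k" and Q: "order_ge k (Q - 1)"
  shows "order_ge (k + 1) (ser_exp c * Q * ser_exp c - Q - (c + c))"
proof -
  define u where "u = ser_exp c - 1 - c"
  have c_ord: "order_ge k c"
    using c(1) by (rule homog_order_ge) simp
  have u: "order_ge (k + 1) u"
    unfolding u_def using order_ge_ser_exp_sub[OF c_ord c(2)] by (rule order_ge_mono) (use c in simp)
  have "ser_exp c * Q * ser_exp c - Q - (c + c)
      = c * (Q - 1) + (Q - 1) * c + u * Q + Q * u + (c + u) * Q * (c + u)"
    by (simp add: u_def algebra_simps)
  moreover have "order_ge (k + 1) (c * (Q - 1))" "order_ge (k + 1) ((Q - 1) * c)"
    using order_ge_mult[OF c_ord Q] order_ge_mult[OF Q c_ord] c(2) by (auto intro: order_ge_mono)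
  moreover have "order_ge (k + 1) ((c + u) * Q * (c + u))"
  proof -
    have "order_ge k (c + u)"
      using order_ge_add[OF c_ord order_ge_mono[OF u]] by simp
    then have "order_ge (k + k) ((c + u) * Q * (c + u))"
      by (intro order_ge_mult order_ge_mult_right)
    then show ?thesis
      by (rule order_ge_mono) (use c(2) in simp)
  qed
  ultimately show ?thesis
    using u by (simp add: order_ge_add order_ge_mult_left order_ge_mult_right)
qed

definition next_factor :: "'a::field ser list \<Rightarrow> nat \<Rightarrow> 'a ser" where
  "next_factor L k = smult (1 / 2) (component k (middle L))"

lemma homog_next_factor: "homog k (next_factor L k)"
  by (simp add: next_factor_def homog_smult homog_component)

lemma next_factor_step:
  fixes L :: "'a::field_char_0 ser list"
  assumes L: "\<forall>a\<in>set L. is_lie a \<and> pos_homog a" and k: "order_ge k (middle L - 1)" "1 \<le> k"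
  shows "is_lie (next_factor L k)" and "order_ge (k + 1) (middle (L @ [next_factor L k]) - 1)"
proof -
  define c where "c = next_factor L k"
  have "\<forall>a\<in>set (map uminus (rev (left_factors L)) @ [X_plus_Y] @ map uminus (rev (right_factors L))).
      is_lie a \<and> pos_homog a"
    using L lie_half_X lie_half_Y lie_X_plus_Y
    by (auto simp: left_factors_def right_factors_def intro!: is_lie_uminus pos_homog_uminus)
  then have "is_lie (component k (middle L))"
    unfolding middle_eq_exp_prod
    by (rule is_lie_component_exp_prod) (use k in \<open>simp_all add: middle_eq_exp_prod\<close>)
  then show "is_lie (next_factor L k)"
    by (simp add: next_factor_def is_lie_smult)
  have twice: "component k (middle L) = c + c"
    by (simp add: c_def next_factor_def smult_add_left[symmetric])
  have "middle (L @ [c]) - 1 = (ser_exp (- c) * middle L * ser_exp (- c) - middle L - (- c + - c))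
      + (middle L - 1 - component k (middle L))"
    by (simp add: middle_snoc twice)
  moreover have "order_ge (k + 1) (ser_exp (- c) * middle L * ser_exp (- c) - middle L - (- c + - c))"
    unfolding c_def by (rule order_ge_exp_sandwich[OF homog_uminus[OF homog_next_factor] k(2) k(1)])
  moreover have "order_ge (k + 1) (middle L - 1 - component k (middle L))"
    by (rule order_ge_sub_component[OF k])
  ultimately show "order_ge (k + 1) (middle (L @ [next_factor L k]) - 1)"
    unfolding c_def by (metis order_ge_add)
qed

primrec factors :: "nat \<Rightarrow> 'a::field ser list" where
  "factors 0 = []"
| "factors (Suc n) = factors n @ [next_factor (factors n) (n + 2)]"

definition C_ser :: "nat \<Rightarrow> 'a::field ser" where
  "C_ser k = next_factor (factors (k - 2)) k"

lemma factors_eq_map: "factors n = map C_ser [2..<n + 2]"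
  by (induction n) (simp_all add: C_ser_def)

lemma factors_invariant:
  "(\<forall>a\<in>set (factors n :: 'a::field_char_0 ser list). is_lie a \<and> pos_homog a)
    \<and> order_ge (n + 2) (middle (factors n) - (1 :: 'a ser))"
proof (induction n)
  case 0
  then show ?case
    using order_ge_middle_Nil by (simp add: numeral_2_eq_2)
next
  case (Suc n)
  then have L: "\<forall>a\<in>set (factors n :: 'a ser list). is_lie a \<and> pos_homog a"
    and M: "order_ge (n + 2) (middle (factors n) - (1 :: 'a ser))"
    by simp_all
  have "pos_homog (next_factor (factors n) (n + 2) :: 'a ser)"
    using homog_next_factor by (auto simp: pos_homog_def)
  then show ?case
    using L next_factor_step[OF L M] by simp
qed

lemma homog_C_ser: "homog k (C_ser k)"
  by (simp add: C_ser_def homog_next_factor)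

lemma is_lie_C_ser:
  assumes "2 \<le> k"
  shows "is_lie (C_ser k :: 'a::field_char_0 ser)"
proof -
  have "C_ser k \<in> set (factors (k - 1) :: 'a ser list)"
    using assms by (simp add: factors_eq_map)
  then show ?thesis
    using factors_invariant[of "k - 1", where 'a = 'a] by blast
qed

lemma order_ge_partial_C_ser:
  "order_ge (n + 2) (ser_exp X_plus_Y - exp_prod (left_factors (factors n) @ right_factors (factors n))
    :: 'a::field_char_0 ser)"
proof -
  have L: "\<forall>a\<in>set (factors n). pos_homog (a :: 'a ser)"
    and M: "order_ge (n + 2) (middle (factors n) - (1 :: 'a ser))"
    using factors_invariant by blast+
  then have "order_ge (n + 2) (ser_exp X_plus_Y
      - exp_prod (left_factors (factors n)) * 1 * exp_prod (right_factors (factors n)) :: 'a ser)"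
    using order_ge_middle_iff[OF L] by blast
  then show ?thesis
    by (simp add: exp_prod_append)
qed

section \<open>Existence and uniqueness\<close>

lemma formal_lim_iff_order_ge:
  "formal_lim F L \<longleftrightarrow> (\<forall>k. \<exists>N0. \<forall>N\<ge>N0. order_ge k (Ser L - Ser (F N)))"
proof
  assume "formal_lim F L"
  then obtain N0 where N0: "\<And>w N. N \<ge> N0 w \<Longrightarrow> F N w = L w"
    unfolding formal_lim_def by metis
  show "\<forall>k. \<exists>N0. \<forall>N\<ge>N0. order_ge k (Ser L - Ser (F N))"
  proof
    fix k
    let ?S = "{w :: bool list. set w \<subseteq> UNIV \<and> length w \<le> k}"
    have "finite ?S"
      by (rule finite_lists_length_le) simp
    then have "N0 w \<le> Max (N0 ` ?S)" if "length w < k" for w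
      using that by (intro Max_ge) auto
    then have "F N w = L w" if "Max (N0 ` ?S) \<le> N" "length w < k" for N w
      using that by (intro N0) (auto intro: le_trans)
    then have "order_ge k (Ser L - Ser (F N))" if "Max (N0 ` ?S) \<le> N" for N
      using that by (simp add: order_ge_def)
    then show "\<exists>N1. \<forall>N\<ge>N1. order_ge k (Ser L - Ser (F N))"
      by blast
  qed
next
  assume H: "\<forall>k. \<exists>N0. \<forall>N\<ge>N0. order_ge k (Ser L - Ser (F N))"
  show "formal_lim F L"
    unfolding formal_lim_def
  proof
    fix w :: "bool list"
    obtain N0 where "\<forall>N\<ge>N0. order_ge (Suc (length w)) (Ser L - Ser (F N))"
      using H by blast
    then have "\<forall>N\<ge>N0. F N w = L w"
      using order_geD[where w = w] by fastforce
    then show "\<exists>N0. \<forall>N\<ge>N0. F N w = L w"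
      by blast
  qed
qed

lemma sym_factorization_C_ser: "sym_factorization (\<lambda>k. coeff (C_ser k :: 'a::field_char_0 ser))"
  unfolding sym_factorization_def
proof (intro conjI allI impI)
  fix k :: nat
  assume "2 \<le> k"
  then show "coeff (C_ser k :: 'a ser) \<in> lie_polys"
    using is_lie_C_ser by (auto simp: is_lie_def)
  show "homogeneous k (coeff (C_ser k :: 'a ser))"
    by (rule homog_C_ser)
next
  have "order_ge k (ser_exp X_plus_Y - Ser (sym_partial (\<lambda>k. coeff (C_ser k)) N) :: 'a ser)"
    if "Suc k \<le> N" for k N
  proof -
    have "map (\<lambda>j. Ser (coeff (C_ser j :: 'a ser))) [2..<Suc N] = factors (N - 1)"
      using that by (cases N) (simp_all add: factors_eq_map coeff_inverse del: upt_Suc)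
    then have "Ser (sym_partial (\<lambda>k. coeff (C_ser k)) N)
        = (exp_prod (left_factors (factors (N - 1)) @ right_factors (factors (N - 1))) :: 'a ser)"
      by (simp add: sym_partial_eq coeff_inverse del: upt_Suc)
    then show ?thesis
      using order_ge_partial_C_ser[of "N - 1", where 'a = 'a] that by (auto intro: order_ge_mono)
  qed
  then show "formal_lim (sym_partial (\<lambda>k. coeff (C_ser k :: 'a ser))) (ps_exp (ps_add ps_X ps_Y))"
    unfolding formal_lim_iff_order_ge ps_exp_X_plus_Y coeff_inverse by blast
qed

lemma exp_prod_left_right_factors_split:
  "exp_prod (left_factors (L @ c # R) @ right_factors (L @ c # R))
    = exp_prod (left_factors L) * (ser_exp c * exp_prod (R @ rev R) * ser_exp c) * exp_prod (right_factors L)"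
  by (simp add: left_factors_def right_factors_def exp_prod_append mult.assoc)

lemma component_middle_eq:
  fixes L :: "'a::field_char_0 ser list"
  assumes L: "\<forall>a\<in>set L. pos_homog a" and c: "homog k c" "1 \<le> k" and Q: "order_ge (k + 1) (Q - 1)"
    and close: "order_ge (k + 1)
      (ser_exp X_plus_Y - exp_prod (left_factors L) * (ser_exp c * Q * ser_exp c) * exp_prod (right_factors L))"
  shows "component k (middle L) = c + c"
proof -
  let ?T = "ser_exp c * Q * ser_exp c"
  have "order_ge (k + 1) (middle L - ?T)"
    by (rule order_ge_middle_iff[OF L, THEN iffD2, OF close])
  moreover have "order_ge (k + 1) (?T - Q - (c + c))"
    by (rule order_ge_exp_sandwich[OF c order_ge_mono[OF Q]]) simp
  moreover have "middle L - (Q + (c + c)) = (middle L - ?T) + (?T - Q - (c + c))"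
    by (simp add: algebra_simps)
  ultimately have "order_ge (k + 1) (middle L - (Q + (c + c)))"
    by (simp only: order_ge_add)
  then have "component k (middle L) = component k (Q + (c + c))"
    by (rule component_eq_if_order_ge)
  also have "\<dots> = component k Q + (c + c)"
    using component_homog[OF homog_add[OF c(1) c(1)], of k] by (simp add: component_add)
  also have "component k Q = component k (Q - 1) + component k 1"
    by (simp add: component_add[symmetric])
  also have "\<dots> = 0"
    using Q c(2) by (simp add: component_eq_0 component_1)
  finally show ?thesis
    by simp
qed

lemma homog_sym_factorization: "sym_factorization C \<Longrightarrow> 2 \<le> j \<Longrightarrow> homog j (Ser (C j))"
  by (simp add: sym_factorization_def)

lemma upt_eq_append_Cons: "m \<le> k \<Longrightarrow> k < n \<Longrightarrow> [m..<n] = [m..<k] @ k # [Suc k..<n]"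
  using upt_add_eq_append[of m k "n - k"] upt_conv_Cons[of k n] by simp

lemma sym_factorization_unique:
  fixes C :: "nat \<Rightarrow> 'a::field_char_0 ncps"
  assumes C: "sym_factorization C"
  shows "2 \<le> k \<Longrightarrow> C k = coeff (C_ser k)"
proof (induction k rule: less_induct)
  case (less k)
  define c where "c = Ser (C k)"
  define L where "L = (factors (k - 2) :: 'a ser list)"
  note homog_C = homog_sym_factorization[OF C]
  have "k - 2 + 2 = k"
    using less.prems by simp
  then have L_eq: "map (\<lambda>j. Ser (C j)) [2..<k] = L"
    unfolding L_def factors_eq_map by (intro map_cong) (auto simp: less.IH coeff_inverse)
  obtain N0 where N0: "\<And>N. N \<ge> N0 \<Longrightarrow> order_ge (k + 1) (ser_exp X_plus_Y - Ser (sym_partial C N))"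
    using C unfolding sym_factorization_def formal_lim_iff_order_ge ps_exp_X_plus_Y coeff_inverse
    by blast
  define N where "N = max N0 k"
  have N: "k \<le> N" and close: "order_ge (k + 1)
      (ser_exp X_plus_Y - exp_prod (left_factors (map (\<lambda>j. Ser (C j)) [2..<Suc N])
        @ right_factors (map (\<lambda>j. Ser (C j)) [2..<Suc N])))"
    using N0[of N] by (simp_all add: N_def sym_partial_eq coeff_inverse)
  define R where "R = map (\<lambda>j. Ser (C j)) [Suc k..<Suc N]"
  have "map (\<lambda>j. Ser (C j)) [2..<Suc N] = L @ c # R"
    using upt_eq_append_Cons[of 2 k "Suc N"] less.prems N by (simp add: L_eq c_def R_def del: upt_Suc)
  moreover have "order_ge (k + 1) (exp_prod (R @ rev R) - 1)"
    using less.prems by (intro order_ge_exp_prod_sub_1) (auto simp: R_def intro!: homog_order_ge homog_C)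
  moreover have "\<forall>a\<in>set L. pos_homog a"
    using factors_invariant[of "k - 2", where 'a = 'a] by (simp add: L_def)
  ultimately have "component k (middle L) = c + c"
    using close less.prems homog_C[of k]
    by (intro component_middle_eq) (simp_all add: c_def exp_prod_left_right_factors_split)
  then have "C_ser k = c"
    by (simp add: C_ser_def next_factor_def L_def smult_add_right smult_add_left[symmetric])
  then show ?case
    by (simp add: c_def)
qed

section \<open>The even factors vanish\<close>

definition neg_vars :: "'a::comm_ring_1 ser \<Rightarrow> 'a ser" where
  "neg_vars f = Ser (\<lambda>w. (-1) ^ length w * coeff f w)"

lemma coeff_neg_vars: "coeff (neg_vars f) w = (-1) ^ length w * coeff f w"
  by (simp add: neg_vars_def)

lemma neg_vars_mult: "neg_vars (f * g) = neg_vars f * neg_vars g"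
proof (rule ser_eqI)
  fix w :: "bool list"
  have "(-1) ^ length w * (coeff f (take i w) * coeff g (drop i w))
      = ((-1) ^ length (take i w) * coeff f (take i w)) * ((-1) ^ length (drop i w) * coeff g (drop i w))"
    if "i \<le> length w" for i
  proof -
    have "((-1) ^ length w :: 'a) = (-1) ^ length (take i w) * (-1) ^ length (drop i w)"
      using that by (simp flip: power_add)
    then show ?thesis
      by (simp add: algebra_simps)
  qed
  then show "coeff (neg_vars (f * g)) w = coeff (neg_vars f * neg_vars g) w"
    by (simp add: coeff_neg_vars coeff_mult sum_distrib_left)
qed

lemma neg_vars_1: "neg_vars 1 = 1"
  and neg_vars_diff: "neg_vars (f - g) = neg_vars f - neg_vars g"
  by (rule ser_eqI; simp add: coeff_neg_vars coeff_1 algebra_simps)+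

lemma neg_vars_ser_exp: "neg_vars (ser_exp a) = ser_exp (neg_vars a)"
proof -
  have power: "neg_vars (a ^ n) = neg_vars a ^ n" for n
    by (induction n) (simp_all add: neg_vars_1 neg_vars_mult)
  show ?thesis
    by (intro ser_eqI) (simp add: coeff_neg_vars ser_exp_def sum_distrib_left flip: power)
qed

lemma neg_vars_exp_prod: "neg_vars (exp_prod L) = exp_prod (map neg_vars L)"
  by (induction L) (simp_all add: neg_vars_1 neg_vars_mult neg_vars_ser_exp)

lemma neg_vars_homog: "homog k f \<Longrightarrow> neg_vars f = smult ((-1) ^ k) f"
  by (rule ser_eqI) (auto simp: coeff_neg_vars homogeneous_def)

lemma order_ge_neg_vars: "order_ge n f \<Longrightarrow> order_ge n (neg_vars f)"
  by (simp add: order_ge_def coeff_neg_vars)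

lemma order_ge_partial_neg_vars:
  fixes L L' :: "'a::field_char_0 ser list"
  assumes L': "map neg_vars L = map uminus L'" "\<forall>a\<in>set L'. pos_homog a"
    and close: "order_ge m (ser_exp X_plus_Y - exp_prod (left_factors L @ right_factors L))"
  shows "order_ge m (ser_exp X_plus_Y - exp_prod (left_factors L' @ right_factors L'))"
proof -
  let ?E = "ser_exp X_plus_Y :: 'a ser"
  let ?S = "exp_prod (left_factors L @ right_factors L)"
  let ?S' = "exp_prod (left_factors L' @ right_factors L')"
  have half: "neg_vars half_X = - half_X" "neg_vars half_Y = - half_Y"
    using neg_vars_homog[OF homog_smult[OF homog_X]] neg_vars_homog[OF homog_smult[OF homog_Y]]
    by (simp_all add: half_X_def half_Y_def smult_minus_left)
  have "map neg_vars (rev L) = map uminus (rev L')"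
    using L'(1) by (simp flip: rev_map)
  then have "neg_vars ?S = exp_prod_inv (left_factors L' @ right_factors L')"
    using L'(1) unfolding neg_vars_exp_prod
    by (simp add: exp_prod_inv_def left_factors_def right_factors_def half)
  moreover have "?S' * exp_prod_inv (left_factors L' @ right_factors L') = 1"
    by (rule exp_prod_mult_inv) (use pos_homog_left_right_factors[OF L'(2)] in auto)
  ultimately have S: "?S' * neg_vars ?S = 1"
    by simp
  have XY: "homog 1 (X_plus_Y :: 'a ser)"
    unfolding X_plus_Y_def by (rule homog_add[OF homog_X homog_Y])
  then have "neg_vars ?E = ser_exp (- X_plus_Y)"
    by (simp add: neg_vars_ser_exp neg_vars_homog smult_minus_left)
  then have "neg_vars ?E * ?E = 1"
    using ser_exp_minus[OF homog_uminus[OF XY]] by simp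
  moreover have "?S' * neg_vars (?E - ?S) * ?E = ?S' * (neg_vars ?E * ?E) - (?S' * neg_vars ?S) * ?E"
    by (simp add: neg_vars_diff algebra_simps)
  ultimately have "?S' - ?E = ?S' * neg_vars (?E - ?S) * ?E"
    using S by simp
  then have "order_ge m (?S' - ?E)"
    using order_ge_mult_both[OF order_ge_neg_vars[OF close]] by simp
  then show ?thesis
    using order_ge_uminus by fastforce
qed

lemma sym_factorization_neg_vars:
  fixes C :: "nat \<Rightarrow> 'a::field_char_0 ncps"
  assumes C: "sym_factorization C"
  shows "sym_factorization (\<lambda>k. ps_smult (- ((-1) ^ k)) (C k))"
  unfolding sym_factorization_def
proof (intro conjI allI impI)
  fix k :: nat
  assume "2 \<le> k"
  then have lie: "C k \<in> lie_polys" and homog: "homogeneous k (C k)"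
    using C by (simp_all add: sym_factorization_def)
  show "ps_smult (- ((-1) ^ k)) (C k) \<in> lie_polys"
    using lie by (rule lie_smult)
  show "homogeneous k (ps_smult (- ((-1) ^ k)) (C k))"
    using homog by (simp add: homogeneous_def ps_smult_def)
next
  let ?D = "\<lambda>k. ps_smult (- ((-1) ^ k)) (C k)"
  note homog_C = homog_sym_factorization[OF C]
  have "order_ge k (ser_exp X_plus_Y - Ser (sym_partial ?D N))"
    if "order_ge k (ser_exp X_plus_Y - Ser (sym_partial C N))" for k N
  proof -
    let ?L = "map (\<lambda>j. Ser (C j)) [2..<Suc N]" and ?L' = "map (\<lambda>j. Ser (?D j)) [2..<Suc N]"
    have "map neg_vars ?L = map uminus ?L'"
      by (auto simp: neg_vars_homog[OF homog_C] ps_smult_eq coeff_inverse smult_minus_left)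
    moreover have "pos_homog (Ser (?D j))" if "2 \<le> j" for j
      unfolding pos_homog_def ps_smult_eq coeff_inverse
      by (rule exI[of _ j]) (use homog_smult[OF homog_C[OF that]] that in auto)
    then have "\<forall>a\<in>set ?L'. pos_homog a"
      by auto
    moreover have "order_ge k (ser_exp X_plus_Y - exp_prod (left_factors ?L @ right_factors ?L))"
      using that by (simp add: sym_partial_eq coeff_inverse del: upt_Suc)
    ultimately have "order_ge k (ser_exp X_plus_Y - exp_prod (left_factors ?L' @ right_factors ?L'))"
      by (rule order_ge_partial_neg_vars)
    then show ?thesis
      by (simp add: sym_partial_eq coeff_inverse del: upt_Suc)
  qed
  then show "formal_lim (sym_partial ?D) (ps_exp (ps_add ps_X ps_Y))"
    using C unfolding sym_factorization_def formal_lim_iff_order_ge ps_exp_X_plus_Y coeff_inverse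
    by meson
qed

theorem theorem1:
  shows "\<exists>C :: nat \<Rightarrow> 'k::field_char_0 ncps.
           sym_factorization C \<and>
           (\<forall>C'. sym_factorization C' \<longrightarrow> (\<forall>k\<ge>2. C' k = C k)) \<and>
           (\<forall>k\<ge>1. C (2 * k) = (\<lambda>w. 0))"
proof (intro exI conjI allI impI)
  let ?C = "\<lambda>k. coeff (C_ser k :: 'k ser)"
  show "sym_factorization ?C"
    by (rule sym_factorization_C_ser)
  show "C' k = ?C k" if "sym_factorization C'" "2 \<le> k" for C' k
    using sym_factorization_unique[OF that] .
  fix k :: nat
  assume "1 \<le> k"
  then have "ps_smult (- ((-1) ^ (2 * k))) (?C (2 * k)) = ?C (2 * k)"
    using sym_factorization_unique[OF sym_factorization_neg_vars[OF sym_factorization_C_ser], of "2 * k"]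
    by simp
  then show "?C (2 * k) = (\<lambda>w. 0)"
    by (simp add: ps_smult_def fun_eq_iff)
qed

end
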